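(* Let $\pi=(d_1,\ldots,d_n)$ be a full sequence with $n$ elements, all of whose elements lie in $\{1,\ldots,d_{\max}\}$ (i.e. $\pi=(d_{\max},\ldots,d_{\max},d_{\max}-1,\ldots,d_{\max}-1,\ldots,1,\ldots,1)$), where $d_{\max}$ is its largest element and $d_{\max}\leq n/2$. Then $\pi$ is graphic.
   Context: All graphs are finite, without loops or multiple edges. A sequence $\pi=(d_1,\ldots,d_n)$ of nonnegative integers is called graphic if there exists a graph with $n$ vertices whose vertex degrees are $d_1,\ldots,d_n$; such a graph is called a realization of $\pi$. A sequence $\pi$ with largest element $d_{\max}$ is called a full sequence if every integer $d$ with $1\leq d\leq d_{\max}$ is an element of $\pi$, and the sum of the elements of $\pi$ is even. *)

theory Defs
  imports Main
begin

definition simple_graph_on :: "nat \<Rightarrow> (nat \<Rightarrow> nat \<Rightarrow> bool) \<Rightarrow> bool" where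
  "simple_graph_on n E \<longleftrightarrow>
     (\<forall>u v. E u v \<longrightarrow> E v u) \<and> (\<forall>u. \<not> E u u) \<and> (\<forall>u v. E u v \<longrightarrow> u < n \<and> v < n)"

definition degree_in :: "nat \<Rightarrow> (nat \<Rightarrow> nat \<Rightarrow> bool) \<Rightarrow> nat \<Rightarrow> nat" where
  "degree_in n E u = card {v. v < n \<and> E u v}"

text \<open>A sequence (d_1,...,d_n) (0-indexed list) is graphic if some simple graph on n
  vertices has vertex i of degree d!i.\<close>
definition graphic :: "nat list \<Rightarrow> bool" where
  "graphic d \<longleftrightarrow> (\<exists>E. simple_graph_on (length d) E \<and>
      (\<forall>i < length d. degree_in (length d) E i = d ! i))"

definition full_sequence :: "nat list \<Rightarrow> bool" where
  "full_sequence d \<longleftrightarrow> d \<noteq> [] \<and> (\<forall>k. 1 \<le> k \<and> k \<le> Max (set d) \<longrightarrow> k \<in> set d)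
      \<and> even (sum_list d)"

end

theory Submission
  imports Defs "HOL-Combinatorics.List_Permutation"
begin

(* Induction on the length, following Havel and Hakimi. Sort the sequence decreasingly as
   m # r, join a new vertex of degree m to the vertices carrying the first m entries a of r,
   and recurse on the residual sequence: a decreased by one, followed by the remaining
   entries b, with zeros dropped. Sortedness gives y \<le> x for all x in a and y in b, and
   fullness gives {1..<m} \<subseteq> set a \<union> set b. Together they force the residual sequence
   to be full again, and force both the entries of a that survive and the list b to number
   at least the new maximum M, so that 2 M is still bounded by the length. Parity is only
   needed when M = 1, to rule out a single remaining entry. *)

lemma graphic_Nil: "graphic []"
  unfolding graphic_def simple_graph_on_def by (rule exI[of _ "\<lambda>_ _. False"]) simp

lemma graphic_mset_eq:
  assumes "graphic xs" and "mset ys = mset xs"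
  shows "graphic ys"
proof -
  define n where "n = length xs"
  have len: "length ys = n"
    using assms(2) unfolding n_def by (metis size_mset)
  obtain f where f: "bij_betw f {..<n} {..<n}" and ys_nth: "\<forall>i<n. ys ! i = xs ! f i"
    using permutation_Ex_bij[OF assms(2)] len n_def by metis
  obtain E where E: "simple_graph_on n E" and deg: "\<forall>i<n. degree_in n E i = xs ! i"
    using assms(1) unfolding graphic_def n_def by blast
  define E' where "E' u v \<longleftrightarrow> u < n \<and> v < n \<and> E (f u) (f v)" for u v
  have "simple_graph_on n E'"
    using E unfolding simple_graph_on_def E'_def by auto
  moreover have "degree_in n E' u = ys ! u" if u: "u < n" for u
  proof -
    have "bij_betw f {v. v < n \<and> E' u v} {w. w < n \<and> E (f u) w}"
      by (rule bij_betw_subset[OF f]) (use u f in \<open>auto simp: E'_def bij_betw_def image_iff\<close>)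
    then have "degree_in n E' u = degree_in n E (f u)"
      unfolding degree_in_def by (rule bij_betw_same_card)
    also have "\<dots> = ys ! u"
      using deg ys_nth f u by (auto simp: bij_betw_def)
    finally show ?thesis .
  qed
  ultimately show ?thesis
    unfolding graphic_def using len by auto
qed

lemma graphic_snoc_0:
  assumes "graphic xs"
  shows "graphic (xs @ [0])"
proof -
  define n where "n = length xs"
  obtain E where E: "simple_graph_on n E" and deg: "\<forall>i<n. degree_in n E i = xs ! i"
    using assms unfolding graphic_def n_def by blast
  have "simple_graph_on (Suc n) E"
    using E unfolding simple_graph_on_def by (meson less_SucI)
  moreover have "degree_in (Suc n) E i = (xs @ [0]) ! i" if "i < Suc n" for i
  proof -
    have "{v. v < Suc n \<and> E i v} = {v. v < n \<and> E i v}"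
      using E unfolding simple_graph_on_def by auto
    then show ?thesis
      using E deg that unfolding simple_graph_on_def
      by (cases "i < n") (auto simp: degree_in_def nth_append n_def)
  qed
  ultimately show ?thesis
    unfolding graphic_def n_def by auto
qed

lemma graphic_if_graphic_filter_nonzero:
  assumes "graphic (filter (\<lambda>x. x \<noteq> 0) xs)"
  shows "graphic xs"
proof -
  have "graphic (filter (\<lambda>x. x \<noteq> 0) xs @ replicate k 0)" for k
  proof (induction k)
    case (Suc k)
    then show ?case
      using graphic_snoc_0[OF Suc] by (simp flip: replicate_append_same)
  qed (use assms in simp)
  moreover have "mset xs = mset (filter (\<lambda>x. x \<noteq> 0) xs @ replicate (count (mset xs) 0) 0)"
    by (induction xs) auto
  ultimately show ?thesis
    using graphic_mset_eq by blast
qed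

lemma graphic_Cons_if_graphic_lay_off:
  assumes m: "m \<le> length r" and pos: "\<forall>x\<in>set (take m r). 1 \<le> x"
    and g: "graphic (map (\<lambda>x. x - 1) (take m r) @ drop m r)"
  shows "graphic (m # r)"
proof -
  define n where "n = length r"
  obtain E where E: "simple_graph_on n E"
    and deg: "\<forall>i<n. degree_in n E i = (map (\<lambda>x. x - 1) (take m r) @ drop m r) ! i"
    using g m unfolding graphic_def n_def by auto
  define E' where "E' u v \<longleftrightarrow> (u = 0 \<and> v \<in> {1..m}) \<or> (v = 0 \<and> u \<in> {1..m})
      \<or> (u \<noteq> 0 \<and> v \<noteq> 0 \<and> E (u - 1) (v - 1))" for u v
  have "simple_graph_on (Suc n) E'"
    using E m unfolding simple_graph_on_def E'_def n_def by (auto; fastforce)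
  moreover have "degree_in (Suc n) E' u = (m # r) ! u" if u: "u < Suc n" for u
  proof (cases u)
    case 0
    then have "{v. v < Suc n \<and> E' u v} = {1..m}"
      using m E unfolding E'_def simple_graph_on_def n_def by auto
    then show ?thesis
      using 0 by (simp add: degree_in_def)
  next
    case (Suc i)
    have "{v. v < Suc n \<and> E' u v} = (if i < m then {0} else {}) \<union> Suc ` {w. w < n \<and> E i w}"
      using Suc E unfolding E'_def simple_graph_on_def
      by (auto simp: image_iff gr0_conv_Suc)
    then have "degree_in (Suc n) E' u = (if i < m then 1 else 0) + degree_in n E i"
      by (simp add: degree_in_def card_image)
    also have "\<dots> = r ! i"
      using deg u Suc m pos by (auto simp: nth_append n_def in_set_conv_nth)
    finally show ?thesis
      using Suc by simp
  qed
  ultimately show ?thesis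
    unfolding graphic_def n_def by auto
qed

(* The degree sequence left when a vertex adjacent exactly to the vertices of degrees a is
   deleted, with the vertices that become isolated dropped. *)
definition residual_seq :: "nat list \<Rightarrow> nat list \<Rightarrow> nat list" where
  "residual_seq a b = filter (\<lambda>x. x \<noteq> 0) (map (\<lambda>x. x - 1) a @ b)"

lemma set_residual_seq:
  "x \<in> set (residual_seq a b) \<longleftrightarrow> x \<noteq> 0 \<and> (Suc x \<in> set a \<or> x \<in> set b)"
  by (force simp: residual_seq_def)

lemma length_residual_seq:
  assumes "0 \<notin> set b"
  shows "length (residual_seq a b) = length (filter (\<lambda>x. 1 < x) a) + length b"
proof -
  have "filter (\<lambda>x. x \<noteq> 0) b = b"
    using assms by (induction b) auto
  then show ?thesis
    by (induction a) (auto simp: residual_seq_def)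
qed

lemma sum_list_residual_seq:
  assumes "0 \<notin> set a"
  shows "sum_list (residual_seq a b) + length a = sum_list a + sum_list b"
proof -
  have "sum_list (filter (\<lambda>x. x \<noteq> 0) xs) = sum_list xs" for xs :: "nat list"
    by (induction xs) auto
  moreover have "sum_list (map (\<lambda>x. x - 1) a) + length a = sum_list a"
    using assms by (induction a) auto
  ultimately show ?thesis
    by (simp add: residual_seq_def)
qed

lemma length_residual_seq_le: "length (residual_seq a b) \<le> length a + length b"
  unfolding residual_seq_def by (metis length_filter_le length_append length_map)

lemma graphic_Cons_if_graphic_residual_seq:
  assumes "m \<le> length r" and "\<forall>x\<in>set r. 1 \<le> x"
    and "graphic (residual_seq (take m r) (drop m r))"
  shows "graphic (m # r)"
proof (rule graphic_Cons_if_graphic_lay_off)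
  show "graphic (map (\<lambda>x. x - 1) (take m r) @ drop m r)"
    using assms(3) unfolding residual_seq_def by (rule graphic_if_graphic_filter_nonzero)
qed (use assms in \<open>auto dest: in_set_takeD\<close>)

(* a, b: the first m entries of the sorted tail and the rest. *)
context
  fixes m :: nat and a b :: "nat list"
  assumes range: "set a \<union> set b \<subseteq> {1..m}"
    and cover: "{1..<m} \<subseteq> set a \<union> set b"
    and split_sorted: "\<forall>x\<in>set a. \<forall>y\<in>set b. y \<le> x"
    and nonempty: "residual_seq a b \<noteq> []"
begin

lemma Max_residual_seq_in_cases:
  "Suc (Max (set (residual_seq a b))) \<in> set a \<or> Max (set (residual_seq a b)) \<in> set b"
proof -
  have "Max (set (residual_seq a b)) \<in> set (residual_seq a b)"
    using nonempty by simp
  then show ?thesis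
    unfolding set_residual_seq by blast
qed

lemma Max_residual_seq_le: "Max (set (residual_seq a b)) \<le> m"
  using Max_residual_seq_in_cases range by fastforce

lemma residual_seq_gap_free:
  assumes k: "1 \<le> k" "k \<le> Max (set (residual_seq a b))"
  shows "k \<in> set (residual_seq a b)"
proof (rule ccontr)
  define M where "M = Max (set (residual_seq a b))"
  note M = Max_residual_seq_in_cases[folded M_def] Max_residual_seq_le[folded M_def]
  assume "k \<notin> set (residual_seq a b)"
  then have Suc_k_a: "Suc k \<notin> set a" and k_b: "k \<notin> set b"
    using k by (auto simp: set_residual_seq)
  have "k \<noteq> m"
  proof
    assume "k = m"
    then have "M = m"
      using k M(2) unfolding M_def by simp
    then show False
      using M(1) k_b range \<open>k = m\<close> by fastforce
  qed
  then have "k < m"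
    using k M(2) unfolding M_def by simp
  then have k_a: "k \<in> set a"
    using cover k k_b by auto
  then have "Suc k \<notin> set b"
    using split_sorted by fastforce
  then have "Suc k \<notin> {1..<m}"
    using cover Suc_k_a by blast
  then have "Suc k = m"
    using \<open>k < m\<close> by simp
  have "M < k"
    using M(1)
  proof
    assume "Suc M \<in> set a"
    then have "Suc M \<le> m" and "Suc M \<noteq> Suc k"
      using range Suc_k_a by auto
    then show "M < k"
      using \<open>Suc k = m\<close> by simp
  next
    assume "M \<in> set b"
    then show "M < k"
      using split_sorted k_a k_b le_neq_implies_less by blast
  qed
  then show False
    using k unfolding M_def by simp
qed

lemma Max_residual_seq_le_length_right:
  assumes "m \<le> Suc (length b)"
  shows "Max (set (residual_seq a b)) \<le> length b"
proof (cases "m \<in> set b")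
  case True
  then have "set a \<subseteq> {m}"
    using split_sorted range by fastforce
  then have "{1..m} \<subseteq> set b"
    using cover True by fastforce
  then have "m \<le> length b"
    using card_mono[OF finite_set] card_length[of b] by fastforce
  then show ?thesis
    using Max_residual_seq_le by simp
next
  case False
  then have "Max (set (residual_seq a b)) \<noteq> m"
    using Max_residual_seq_in_cases range by fastforce
  then show ?thesis
    using Max_residual_seq_le assms by simp
qed

lemma Max_residual_seq_le_length_left:
  assumes "length a = m" and "2 \<le> Max (set (residual_seq a b))"
  shows "Max (set (residual_seq a b)) \<le> length (filter (\<lambda>x. 1 < x) a)"
proof (cases "1 \<in> set a")
  case False
  have "1 < x" if "x \<in> set a" for x
    using that False range by (cases "x = 1") auto
  then have "filter (\<lambda>x. 1 < x) a = a"
    by (simp add: filter_id_conv)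
  then show ?thesis
    using Max_residual_seq_le assms(1) by simp
next
  case True
  define M where "M = Max (set (residual_seq a b))"
  have b_le_1: "\<forall>y\<in>set b. y \<le> 1"
    using split_sorted True by blast
  then have "Suc M \<in> set a"
    using Max_residual_seq_in_cases assms(2) unfolding M_def by force
  then have "Suc M \<le> m"
    using range by auto
  have "{2..Suc M} \<subseteq> set (filter (\<lambda>x. 1 < x) a)"
  proof
    fix j assume j: "j \<in> {2..Suc M}"
    have "j \<in> set a"
    proof (cases "j = Suc M")
      case False
      then have "j \<in> {1..<m}"
        using j \<open>Suc M \<le> m\<close> by auto
      then have "j \<in> set a \<union> set b"
        using cover by blast
      then show ?thesis
        using b_le_1 j by auto
    qed (use \<open>Suc M \<in> set a\<close> in simp)
    then show "j \<in> set (filter (\<lambda>x. 1 < x) a)"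
      using j by simp
  qed
  then have "card {2..Suc M} \<le> length (filter (\<lambda>x. 1 < x) a)"
    using card_mono[OF finite_set] card_length le_trans by blast
  then show ?thesis
    unfolding M_def by simp
qed

lemma two_Max_residual_seq_le_length:
  assumes "length a = m" and "m \<le> Suc (length b)" and "even (sum_list (residual_seq a b))"
  shows "2 * Max (set (residual_seq a b)) \<le> length (residual_seq a b)"
proof (cases "Max (set (residual_seq a b)) \<le> 1")
  case True
  have "\<forall>x\<in>set (residual_seq a b). x = 1"
  proof
    fix x assume x: "x \<in> set (residual_seq a b)"
    have "x \<le> Max (set (residual_seq a b))"
      by (rule Max_ge[OF finite_set x])
    moreover have "x \<noteq> 0"
      using x by (simp add: set_residual_seq)
    ultimately show "x = 1"
      using True by simp
  qed
  moreover have "sum_list xs = length xs" if "\<forall>x\<in>set xs. x = 1" for xs :: "nat list"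
    using that by (induction xs) auto
  ultimately have "sum_list (residual_seq a b) = length (residual_seq a b)"
    by blast
  then have "even (length (residual_seq a b))" and "length (residual_seq a b) \<noteq> 0"
    using assms(3) nonempty by simp_all
  then have "2 \<le> length (residual_seq a b)"
    by presburger
  then show ?thesis
    using True by simp
next
  case False
  have "0 \<notin> set b"
    using range by auto
  then have "length (residual_seq a b) = length (filter (\<lambda>x. 1 < x) a) + length b"
    by (rule length_residual_seq)
  moreover have "Max (set (residual_seq a b)) \<le> length (filter (\<lambda>x. 1 < x) a)"
    using False assms(1) by (intro Max_residual_seq_le_length_left) auto
  moreover have "Max (set (residual_seq a b)) \<le> length b"
    using assms(2) by (rule Max_residual_seq_le_length_right)
  ultimately show ?thesis
    by simp
qed

end

lemma full_sequence_mset_eq: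
  assumes "full_sequence xs" and "mset ys = mset xs"
  shows "full_sequence ys"
  using assms unfolding full_sequence_def
  by (metis mset_eq_setD mset_zero_iff sum_mset_sum_list)

lemma Max_set_Cons_sorted_desc:
  assumes "sorted_wrt (\<ge>) (m # r)"
  shows "Max (set (m # r)) = m"
  using assms by (auto intro: Max_eqI)

lemma obtain_sorted_desc_Cons:
  fixes xs :: "'a::linorder list"
  assumes "xs \<noteq> []"
  obtains m r where "mset (m # r) = mset xs" and "sorted_wrt (\<ge>) (m # r)"
proof -
  obtain m r where s: "rev (sort xs) = m # r"
    using assms by (cases "rev (sort xs)") (auto dest: arg_cong[where f = length])
  then have "mset (m # r) = mset xs" and "sorted_wrt (\<ge>) (m # r)"
    by (simp_all add: sorted_wrt_rev flip: s)
  then show thesis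
    by (rule that)
qed

lemma full_sequence_residual_seq:
  assumes sorted: "sorted_wrt (\<ge>) (m # r)" and full: "full_sequence (m # r)"
    and pos: "\<forall>x\<in>set (m # r). 1 \<le> x" and bound: "2 * m \<le> length (m # r)"
    and nonempty: "residual_seq (take m r) (drop m r) \<noteq> []"
  shows "full_sequence (residual_seq (take m r) (drop m r))"
    and "2 * Max (set (residual_seq (take m r) (drop m r))) \<le> length (residual_seq (take m r) (drop m r))"
proof -
  let ?a = "take m r" and ?b = "drop m r"
  have Max: "Max (set (m # r)) = m"
    using sorted by (rule Max_set_Cons_sorted_desc)
  have range: "set ?a \<union> set ?b \<subseteq> {1..m}"
    using sorted pos by (auto simp flip: set_append)
  have cover: "{1..<m} \<subseteq> set ?a \<union> set ?b"
    using full Max unfolding full_sequence_def by (auto simp flip: set_append)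
  have split_sorted: "\<forall>x\<in>set ?a. \<forall>y\<in>set ?b. y \<le> x"
    using sorted sorted_wrt_append[of "(\<ge>)" ?a ?b] by simp
  have length_a: "length ?a = m" and length_b: "m \<le> Suc (length ?b)"
    using bound pos by auto
  have "0 \<notin> set ?a"
    using range by auto
  then have "sum_list (m # r) = 2 * m + sum_list (residual_seq ?a ?b)"
    using sum_list_residual_seq[of ?a ?b] length_a
    by (simp flip: sum_list_append)
  moreover have "even (sum_list (m # r))"
    using full unfolding full_sequence_def by blast
  ultimately have even: "even (sum_list (residual_seq ?a ?b))"
    by presburger
  show "full_sequence (residual_seq ?a ?b)"
    using residual_seq_gap_free[OF range cover split_sorted nonempty] nonempty even
    unfolding full_sequence_def by blast
  show "2 * Max (set (residual_seq ?a ?b)) \<le> length (residual_seq ?a ?b)"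
    by (rule two_Max_residual_seq_le_length[OF range cover split_sorted nonempty length_a length_b even])
qed

theorem lemma4:
  fixes d :: "nat list"
  assumes "full_sequence d"
    and "\<forall>x \<in> set d. 1 \<le> x"
    and "2 * Max (set d) \<le> length d"
  shows "graphic d"
  using assms
proof (induction "length d" arbitrary: d rule: less_induct)
  case less
  obtain m r where mset_eq: "mset (m # r) = mset d" and sorted: "sorted_wrt (\<ge>) (m # r)"
    using less.prems(1) obtain_sorted_desc_Cons unfolding full_sequence_def by blast
  have full: "full_sequence (m # r)"
    using less.prems(1) mset_eq by (rule full_sequence_mset_eq)
  have pos: "\<forall>x\<in>set (m # r). 1 \<le> x" and bound: "2 * m \<le> length (m # r)"
    using less.prems(2,3) mset_eq_setD[OF mset_eq] mset_eq_length[OF mset_eq]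
      Max_set_Cons_sorted_desc[OF sorted] by simp_all
  let ?d' = "residual_seq (take m r) (drop m r)"
  have "graphic ?d'"
  proof (cases "?d' = []")
    case False
    have "length ?d' < length d"
      using length_residual_seq_le[of "take m r" "drop m r"] mset_eq_length[OF mset_eq] by simp
    moreover have "\<forall>x\<in>set ?d'. 1 \<le> x"
      by (simp add: set_residual_seq)
    ultimately show ?thesis
      using less.hyps full_sequence_residual_seq[OF sorted full pos bound False] by blast
  qed (simp add: graphic_Nil)
  then have "graphic (m # r)"
    using pos bound by (intro graphic_Cons_if_graphic_residual_seq) simp_all
  then show ?case
    using mset_eq[symmetric] by (rule graphic_mset_eq)
qed

end
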